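(* Let $\mathcal{R}_0>0$ and let $\kappa:[0,1]\to[0,\infty)$ be a non-decreasing function with $\kappa(0)=0$ and $\kappa(i)>0$ for all $i>0$. Consider the initial value problem \[ \frac{ds}{d\tau}=-\mathcal{R}_0\frac{1}{1+\kappa(i)}\,s\,i,\qquad \frac{di}{d\tau}=\Big(\mathcal{R}_0\frac{1}{1+\kappa(i)}\,s-1\Big)i, \] with initial conditions $s(0)=s_0\ge 0$, $i(0)=i_0>0$ (and $r_0\ge 0$ with $s_0+i_0+r_0=1$), satisfying $s_0\mathcal{R}_0>1+\kappa(i_0)$, and assume its solution $(s(\tau),i(\tau))$ is non-negative. Let $(s^0(\tau),i^0(\tau))$ denote the solution of the same initial value problem with $\kappa\equiv 0$ (the classical SIR model $ds/d\tau=-\mathcal{R}_0 s i$, $di/d\tau=(\mathcal{R}_0 s-1)i$) with the same $\mathcal{R}_0$, $s_0$, $i_0$. Let $i_{max}=\max_{\tau\ge 0} i(\tau)$ and $i^0_{max}=\max_{\tau\ge0} i^0(\tau)$. Then \[ i_{max}<i^0_{max}. \]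
   Context: This is the non-dimensional "feedback SIR" (fSIR) model: $s$ and $i$ are the fractions of susceptible and infected individuals, $r=1-s-i$ the recovered fraction, $\tau$ is rescaled time, $\mathcal{R}_0$ the basic reproduction number, and $\kappa(i)$ the "mitigation function", giving the infection-dependent reproduction number $\mathcal{R}(i)=\mathcal{R}_0/(1+\kappa(i))$. The paper's standing assumptions on $\kappa$ are: non-negative, non-decreasing, $\kappa(0)=0$. *)

theory Defs
  imports Complex_Main
begin

end

theory Submission
  imports Defs "HOL-Analysis.Analysis"
begin

(* The quantity V = i + s - ln s / R0 is conserved by the classical SIR flow and strictly
   decreases, at rate i \<kappa>(i) / (1 + \<kappa>(i)), along the fSIR flow. Since s - ln s / R0 is minimal
   at s = 1/R0, always i \<le> V - V(1/R0, 0), with equality iff s = 1/R0. The classical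
   susceptible fraction does reach 1/R0, so the classical peak is V(s0, i0) - V(1/R0, 0). The fSIR
   infected fraction stays uniformly below that value: near time 0 because s0 \<noteq> 1/R0, and later
   because V has strictly decreased. *)

definition fsir_solution :: "real \<Rightarrow> (real \<Rightarrow> real) \<Rightarrow> (real \<Rightarrow> real) \<Rightarrow> (real \<Rightarrow> real) \<Rightarrow> bool" where
  "fsir_solution R0 \<kappa> s i \<longleftrightarrow>
     (\<forall>\<tau>\<ge>0. (s has_real_derivative (- R0 * (1 / (1 + \<kappa> (i \<tau>))) * s \<tau> * i \<tau>)) (at \<tau> within {0..})) \<and>
     (\<forall>\<tau>\<ge>0. (i has_real_derivative ((R0 * (1 / (1 + \<kappa> (i \<tau>))) * s \<tau> - 1) * i \<tau>)) (at \<tau> within {0..}))"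

definition sir_invariant :: "real \<Rightarrow> real \<Rightarrow> real \<Rightarrow> real" where
  "sir_invariant R0 s i = i + s - ln s / R0"

lemma has_real_derivative_at_if_within_atLeast:
  assumes "(f has_real_derivative D) (at x within {a..})" "a < x"
  shows "(f has_real_derivative D) (at x)"
  using assms at_within_interior[of x "{a..}"] by simp

lemma continuous_on_atLeast_if_deriv:
  assumes "\<And>t. t \<ge> a \<Longrightarrow> (f has_real_derivative f' t) (at t within {a..})"
  shows "continuous_on {a..} f"
  by (rule DERIV_continuous_on) (use assms in auto)

lemma deriv_nonneg_imp_mono_atLeast:
  fixes f f' :: "real \<Rightarrow> real"
  assumes deriv: "\<And>t. t \<ge> a \<Longrightarrow> (f has_real_derivative f' t) (at t within {a..})"
    and nonneg: "\<And>t. t > a \<Longrightarrow> f' t \<ge> 0" and "a \<le> x" "x \<le> y"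
  shows "f x \<le> f y"
proof (rule DERIV_nonneg_imp_increasing_open[OF \<open>x \<le> y\<close>])
  show "continuous_on {x..y} f"
    using continuous_on_subset[OF continuous_on_atLeast_if_deriv[OF deriv]] \<open>a \<le> x\<close> by auto
  fix t assume "x < t" "t < y"
  then have "a < t"
    using \<open>a \<le> x\<close> by simp
  then have "(f has_real_derivative f' t) (at t)"
    using has_real_derivative_at_if_within_atLeast[OF deriv[of t]] by simp
  then show "\<exists>D. (f has_real_derivative D) (at t) \<and> D \<ge> 0"
    using nonneg[OF \<open>a < t\<close>] by blast
qed

lemma deriv_nonpos_imp_antimono_atLeast:
  fixes f f' :: "real \<Rightarrow> real"
  assumes deriv: "\<And>t. t \<ge> a \<Longrightarrow> (f has_real_derivative f' t) (at t within {a..})"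
    and nonpos: "\<And>t. t > a \<Longrightarrow> f' t \<le> 0" and "a \<le> x" "x \<le> y"
  shows "f y \<le> f x"
proof -
  have "(\<lambda>t. - f t) x \<le> (\<lambda>t. - f t) y"
    by (rule deriv_nonneg_imp_mono_atLeast[where f' = "\<lambda>t. - f' t"])
      (use assms in \<open>auto intro!: derivative_eq_intros\<close>)
  then show ?thesis by simp
qed

lemma deriv_neg_imp_strict_antimono_atLeast:
  fixes f f' :: "real \<Rightarrow> real"
  assumes deriv: "\<And>t. t \<ge> a \<Longrightarrow> (f has_real_derivative f' t) (at t within {a..})"
    and neg: "\<And>t. t > a \<Longrightarrow> f' t < 0" and "a \<le> x" "x < y"
  shows "f y < f x"
proof (rule DERIV_neg_imp_decreasing_open[OF \<open>x < y\<close>])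
  show "continuous_on {x..y} f"
    using continuous_on_subset[OF continuous_on_atLeast_if_deriv[OF deriv]] \<open>a \<le> x\<close> by auto
  fix t assume "x < t" "t < y"
  then have "a < t"
    using \<open>a \<le> x\<close> by simp
  then have "(f has_real_derivative f' t) (at t)"
    using has_real_derivative_at_if_within_atLeast[OF deriv[of t]] by simp
  then show "\<exists>D. (f has_real_derivative D) (at t) \<and> D < 0"
    using neg[OF \<open>a < t\<close>] by blast
qed

lemma deriv_ge_linear_imp_pos:
  fixes y y' :: "real \<Rightarrow> real"
  assumes deriv: "\<And>t. t \<ge> 0 \<Longrightarrow> (y has_real_derivative y' t) (at t within {0..})"
    and lower: "\<And>t. t \<ge> 0 \<Longrightarrow> y' t \<ge> - c * y t"
    and "y 0 > 0" "t \<ge> 0"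
  shows "y t > 0"
proof -
  have "(\<lambda>u. y u * exp (c * u)) 0 \<le> (\<lambda>u. y u * exp (c * u)) t"
  proof (rule deriv_nonneg_imp_mono_atLeast[where f = "\<lambda>u. y u * exp (c * u)"])
    fix u :: real assume "u \<ge> 0"
    then show "((\<lambda>u. y u * exp (c * u)) has_real_derivative (y' u + c * y u) * exp (c * u))
        (at u within {0..})"
      using deriv by (auto intro!: derivative_eq_intros simp: algebra_simps)
  next
    fix u :: real assume "u > 0"
    then show "(y' u + c * y u) * exp (c * u) \<ge> 0"
      using lower[of u] by simp
  qed (use \<open>t \<ge> 0\<close> in auto)
  then have "y t * exp (c * t) > 0"
    using \<open>y 0 > 0\<close> by simp
  then show ?thesis
    by (simp add: zero_less_mult_iff)
qed

lemma linear_ode_imp_pos: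
  fixes y a :: "real \<Rightarrow> real"
  assumes deriv: "\<And>t. t \<ge> 0 \<Longrightarrow> (y has_real_derivative a t * y t) (at t within {0..})"
    and cont: "continuous_on {0..} a" and "y 0 > 0" "t \<ge> 0"
  shows "y t > 0"
proof -
  define A where "A u = integral {0..u} a" for u
  have "\<exists>c. \<forall>u\<in>{0..t}. y u * exp (- A u) = c"
  proof (rule has_field_derivative_zero_constant)
    fix u assume u: "u \<in> {0..t}"
    have "(A has_real_derivative a u) (at u within {0..t})"
      unfolding A_def
      by (rule integral_has_real_derivative[OF continuous_on_subset[OF cont] u]) auto
    moreover have "(y has_real_derivative a u * y u) (at u within {0..t})"
      by (rule has_field_derivative_subset[OF deriv]) (use u in auto)
    ultimately have "((\<lambda>u. y u * exp (- A u)) has_real_derivative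
        a u * y u * exp (- A u) + y u * (exp (- A u) * - a u)) (at u within {0..t})"
      by (auto intro!: derivative_eq_intros)
    then show "((\<lambda>u. y u * exp (- A u)) has_real_derivative 0) (at u within {0..t})"
      by (simp add: algebra_simps)
  qed simp
  then obtain k where k: "\<And>u. u \<in> {0..t} \<Longrightarrow> y u * exp (- A u) = k"
    by blast
  have "A 0 = 0"
    by (simp add: A_def)
  then have "y t * exp (- A t) > 0"
    using k[of t] k[of 0] \<open>t \<ge> 0\<close> \<open>y 0 > 0\<close> by simp
  then show ?thesis
    by (simp add: zero_less_mult_iff)
qed

lemma SUP_less_by_majorant:
  fixes f g :: "real \<Rightarrow> real"
  assumes cont: "continuous_on {0..T} f" and "T > 0" and "f 0 < c"
    and le_g: "\<And>t. 0 < t \<Longrightarrow> f t \<le> g t" and g_less: "\<And>t. 0 < t \<Longrightarrow> g t < c"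
    and g_tail: "\<And>t. T \<le> t \<Longrightarrow> g t \<le> g T"
  shows "(SUP t\<in>{0..}. f t) < c"
proof -
  obtain t\<^sub>m where t\<^sub>m: "t\<^sub>m \<in> {0..T}" and max: "\<And>t. t \<in> {0..T} \<Longrightarrow> f t \<le> f t\<^sub>m"
    using continuous_attains_sup[OF compact_Icc _ cont] \<open>T > 0\<close> by auto
  define K where "K = max (f t\<^sub>m) (g T)"
  have "f t\<^sub>m < c"
    using t\<^sub>m \<open>f 0 < c\<close> le_g[of t\<^sub>m] g_less[of t\<^sub>m] by (cases "t\<^sub>m = 0") auto
  then have "K < c"
    using g_less \<open>T > 0\<close> by (simp add: K_def)
  moreover have "(SUP t\<in>{0..}. f t) \<le> K"
  proof (rule cSUP_least)
    fix t :: real assume "t \<in> {0..}"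
    show "f t \<le> K"
    proof (cases "t \<le> T")
      case True
      then show ?thesis
        using max[of t] \<open>t \<in> {0..}\<close> by (simp add: K_def)
    next
      case False
      then show ?thesis
        using le_g[of t] g_tail[of t] \<open>T > 0\<close> by (simp add: K_def)
    qed
  qed simp
  ultimately show ?thesis
    by linarith
qed

lemma sir_invariant_gt:
  assumes "R0 > 0" "s > 0" "s \<noteq> 1 / R0"
  shows "i + sir_invariant R0 (1 / R0) 0 < sir_invariant R0 s i"
proof -
  have "R0 * s \<noteq> 1"
    using assms by (auto simp: field_simps)
  then have "ln (R0 * s) < R0 * s - 1"
    using ln_le_minus_one[of "R0 * s"] ln_eq_minus_one[of "R0 * s"] assms by fastforce
  then have "(1 + ln R0 + ln s) / R0 < (R0 * s) / R0"
    using assms by (intro divide_strict_right_mono) (simp_all add: ln_mult)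
  then show ?thesis
    using assms by (simp add: sir_invariant_def ln_div add_divide_distrib)
qed

lemma sir_invariant_ge:
  assumes "R0 > 0" "s > 0"
  shows "i + sir_invariant R0 (1 / R0) 0 \<le> sir_invariant R0 s i"
  using assms sir_invariant_gt[of R0 s i] by (cases "s = 1 / R0") (auto simp: sir_invariant_def)

lemma
  assumes "fsir_solution R0 \<kappa> s i" "\<tau> \<ge> 0"
  shows fsir_susceptible_deriv:
      "(s has_real_derivative (- R0 * (1 / (1 + \<kappa> (i \<tau>))) * s \<tau> * i \<tau>)) (at \<tau> within {0..})"
    and fsir_infected_deriv:
      "(i has_real_derivative ((R0 * (1 / (1 + \<kappa> (i \<tau>))) * s \<tau> - 1) * i \<tau>)) (at \<tau> within {0..})"
  using assms by (auto simp: fsir_solution_def)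

lemma fsir_sum_le_initial:
  assumes sol: "fsir_solution R0 \<kappa> s i" and i_nonneg: "\<And>t. t \<ge> 0 \<Longrightarrow> i t \<ge> 0" and "t \<ge> 0"
  shows "s t + i t \<le> s 0 + i 0"
proof (rule deriv_nonpos_imp_antimono_atLeast[where f = "\<lambda>t. s t + i t" and f' = "\<lambda>t. - i t"])
  fix \<tau> :: real assume "\<tau> \<ge> 0"
  from DERIV_add[OF fsir_susceptible_deriv[OF sol this] fsir_infected_deriv[OF sol this]]
  show "((\<lambda>t. s t + i t) has_real_derivative - i \<tau>) (at \<tau> within {0..})"
    by (simp add: algebra_simps)
qed (use assms in auto)

lemma fsir_positive:
  assumes sol: "fsir_solution R0 \<kappa> s i" and "R0 > 0" "s 0 > 0" "i 0 > 0"
    and s_nonneg: "\<And>t. t \<ge> 0 \<Longrightarrow> s t \<ge> 0" and i_nonneg: "\<And>t. t \<ge> 0 \<Longrightarrow> i t \<ge> 0"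
    and i_le_1: "\<And>t. t \<ge> 0 \<Longrightarrow> i t \<le> 1" and \<kappa>_nonneg: "\<And>t. t \<ge> 0 \<Longrightarrow> \<kappa> (i t) \<ge> 0"
    and "t \<ge> 0"
  shows "s t > 0" "i t > 0"
proof -
  show "s t > 0"
  proof (rule deriv_ge_linear_imp_pos[OF fsir_susceptible_deriv[OF sol], where c = R0])
    fix \<tau> :: real assume "\<tau> \<ge> 0"
    then have "i \<tau> / (1 + \<kappa> (i \<tau>)) \<le> 1"
      using i_le_1[OF \<open>\<tau> \<ge> 0\<close>] \<kappa>_nonneg[OF \<open>\<tau> \<ge> 0\<close>] by (simp add: divide_le_eq)
    then have "R0 * s \<tau> * (i \<tau> / (1 + \<kappa> (i \<tau>))) \<le> R0 * s \<tau>"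
      by (rule mult_left_le) (use \<open>R0 > 0\<close> s_nonneg[OF \<open>\<tau> \<ge> 0\<close>] in simp)
    then show "- R0 * (1 / (1 + \<kappa> (i \<tau>))) * s \<tau> * i \<tau> \<ge> - R0 * s \<tau>"
      by simp
  qed (use assms in auto)
  show "i t > 0"
  proof (rule deriv_ge_linear_imp_pos[OF fsir_infected_deriv[OF sol], where c = 1])
    fix \<tau> :: real assume "\<tau> \<ge> 0"
    then have "R0 * (1 / (1 + \<kappa> (i \<tau>))) * s \<tau> * i \<tau> \<ge> 0"
      using \<open>R0 > 0\<close> s_nonneg i_nonneg \<kappa>_nonneg by simp
    then show "(R0 * (1 / (1 + \<kappa> (i \<tau>))) * s \<tau> - 1) * i \<tau> \<ge> - 1 * i \<tau>"
      by (simp add: algebra_simps)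
  qed (use assms in auto)
qed

lemma fsir_invariant_has_derivative:
  assumes sol: "fsir_solution R0 \<kappa> s i" and "R0 \<noteq> 0" "\<tau> \<ge> 0" "s \<tau> > 0" "1 + \<kappa> (i \<tau>) \<noteq> 0"
  shows "((\<lambda>t. sir_invariant R0 (s t) (i t)) has_real_derivative
      - i \<tau> * \<kappa> (i \<tau>) / (1 + \<kappa> (i \<tau>))) (at \<tau> within {0..})"
proof -
  define r where "r = R0 * (1 / (1 + \<kappa> (i \<tau>)))"
  have "((\<lambda>t. sir_invariant R0 (s t) (i t)) has_real_derivative
      (r * s \<tau> - 1) * i \<tau> + - r * s \<tau> * i \<tau> - - r * s \<tau> * i \<tau> * inverse (s \<tau>) / R0)
      (at \<tau> within {0..})"
    unfolding sir_invariant_def r_def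
    using fsir_susceptible_deriv[OF sol \<open>\<tau> \<ge> 0\<close>] fsir_infected_deriv[OF sol \<open>\<tau> \<ge> 0\<close>] \<open>s \<tau> > 0\<close>
    by (auto intro!: derivative_eq_intros)
  also have "(r * s \<tau> - 1) * i \<tau> + - r * s \<tau> * i \<tau> - - r * s \<tau> * i \<tau> * inverse (s \<tau>) / R0
      = - i \<tau> + r / R0 * i \<tau>"
    using \<open>R0 \<noteq> 0\<close> \<open>s \<tau> > 0\<close> by (simp add: field_simps)
  also have "r / R0 = 1 / (1 + \<kappa> (i \<tau>))"
    using \<open>R0 \<noteq> 0\<close> by (simp add: r_def)
  also have "- i \<tau> + 1 / (1 + \<kappa> (i \<tau>)) * i \<tau> = - i \<tau> * \<kappa> (i \<tau>) / (1 + \<kappa> (i \<tau>))"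
    using \<open>1 + \<kappa> (i \<tau>) \<noteq> 0\<close> by (simp add: field_simps)
  finally show ?thesis .
qed

lemma
  assumes "fsir_solution R0 (\<lambda>_. 0) s i" "\<tau> \<ge> 0"
  shows sir_susceptible_deriv: "(s has_real_derivative (- R0 * i \<tau>) * s \<tau>) (at \<tau> within {0..})"
    and sir_infected_deriv: "(i has_real_derivative (R0 * s \<tau> - 1) * i \<tau>) (at \<tau> within {0..})"
  using fsir_susceptible_deriv[OF assms] fsir_infected_deriv[OF assms] by (simp_all add: ac_simps)

lemma sir_positive:
  assumes sol: "fsir_solution R0 (\<lambda>_. 0) s i" and "s 0 > 0" "i 0 > 0" "t \<ge> 0"
  shows "s t > 0" "i t > 0"
proof -
  have "continuous_on {0..} s"
    by (rule continuous_on_atLeast_if_deriv[OF sir_susceptible_deriv[OF sol]])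
  then have "continuous_on {0..} (\<lambda>t. R0 * s t - 1)"
    by (intro continuous_intros)
  have "continuous_on {0..} i"
    by (rule continuous_on_atLeast_if_deriv[OF sir_infected_deriv[OF sol]])
  then have "continuous_on {0..} (\<lambda>t. - R0 * i t)"
    by (intro continuous_intros)
  with \<open>continuous_on {0..} (\<lambda>t. R0 * s t - 1)\<close> show "s t > 0" "i t > 0"
    using assms by (auto intro: linear_ode_imp_pos[OF sir_susceptible_deriv[OF sol]]
      linear_ode_imp_pos[OF sir_infected_deriv[OF sol]])
qed

lemma sir_susceptible_reaches_threshold:
  assumes sol: "fsir_solution R0 (\<lambda>_. 0) s i" and "R0 > 0" "s 0 * R0 > 1" "i 0 > 0"
  shows "\<exists>t\<ge>0. s t = 1 / R0"
proof -
  have "s 0 > 0"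
    using zero_less_mult_pos2[of "s 0" R0] assms by simp
  note pos = sir_positive[OF sol this \<open>i 0 > 0\<close>]
  have "\<exists>T\<ge>0. s T \<le> 1 / R0"
  proof (rule ccontr)
    \<comment> \<open>otherwise i never drops below i 0, and s decreases at rate at least i 0\<close>
    assume none: "\<not> ?thesis"
    have above: "R0 * s t > 1" if "t \<ge> 0" for t
    proof -
      have "1 / R0 < s t"
        using none that by (meson not_le)
      then show ?thesis
        using \<open>R0 > 0\<close> by (simp add: field_simps)
    qed
    have i_ge: "i 0 \<le> i t" if "t \<ge> 0" for t
      by (rule deriv_nonneg_imp_mono_atLeast[OF sir_infected_deriv[OF sol]])
        (use that above pos in \<open>auto simp: less_imp_le\<close>)
    define T where "T = s 0 / i 0"
    have "T \<ge> 0"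
      using \<open>s 0 > 0\<close> \<open>i 0 > 0\<close> by (simp add: T_def)
    have "s T + i 0 * T \<le> s 0 + i 0 * 0"
    proof (rule deriv_nonpos_imp_antimono_atLeast[where f = "\<lambda>t. s t + i 0 * t"])
      fix \<tau> :: real assume "\<tau> \<ge> 0"
      show "((\<lambda>t. s t + i 0 * t) has_real_derivative - R0 * i \<tau> * s \<tau> + i 0) (at \<tau> within {0..})"
        using sir_susceptible_deriv[OF sol \<open>\<tau> \<ge> 0\<close>] by (auto intro!: derivative_eq_intros)
    next
      fix \<tau> :: real assume "\<tau> > 0"
      then have "1 * i 0 \<le> (R0 * s \<tau>) * i \<tau>"
        using above[of \<tau>] i_ge[of \<tau>] \<open>i 0 > 0\<close> by (intro mult_mono) auto
      then show "- R0 * i \<tau> * s \<tau> + i 0 \<le> 0"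
        by (simp add: algebra_simps)
    qed (use \<open>T \<ge> 0\<close> in auto)
    then have "s T \<le> 0"
      using \<open>i 0 > 0\<close> by (simp add: T_def)
    then show False
      using pos(1)[OF \<open>T \<ge> 0\<close>] by simp
  qed
  then obtain T where "T \<ge> 0" "s T \<le> 1 / R0"
    by blast
  moreover have "1 / R0 \<le> s 0"
    using assms by (simp add: field_simps)
  moreover have "continuous_on {0..T} s"
    using continuous_on_subset[OF continuous_on_atLeast_if_deriv[OF sir_susceptible_deriv[OF sol]]]
    by auto
  ultimately show ?thesis
    using IVT2'[of s T "1 / R0" 0] by auto
qed

lemma sir_peak:
  assumes sol: "fsir_solution R0 (\<lambda>_. 0) s i" and "R0 > 0" "s 0 * R0 > 1" "i 0 > 0"
  shows "(SUP t\<in>{0..}. i t) = sir_invariant R0 (s 0) (i 0) - sir_invariant R0 (1 / R0) 0"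
    (is "_ = ?peak")
proof -
  have s_pos: "s t > 0" if "t \<ge> 0" for t
    using sir_positive[OF sol _ \<open>i 0 > 0\<close> that] zero_less_mult_pos2[of "s 0" R0] assms by simp
  have "\<exists>c. \<forall>t\<in>{0..}. sir_invariant R0 (s t) (i t) = c"
  proof (rule has_field_derivative_zero_constant)
    fix t :: real assume "t \<in> {0..}"
    then show "((\<lambda>t. sir_invariant R0 (s t) (i t)) has_real_derivative 0) (at t within {0..})"
      using fsir_invariant_has_derivative[OF sol, of t] s_pos \<open>R0 > 0\<close> by simp
  qed simp
  then obtain c where c: "\<And>t. t \<ge> 0 \<Longrightarrow> sir_invariant R0 (s t) (i t) = c"
    by auto
  have conserved: "sir_invariant R0 (s t) (i t) = sir_invariant R0 (s 0) (i 0)" if "t \<ge> 0" for t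
    using c[OF that] c[of 0] by simp
  have below: "i t \<le> ?peak" if "t \<ge> 0" for t
    using sir_invariant_ge[OF \<open>R0 > 0\<close> s_pos[OF that], of "i t"] conserved[OF that] by simp
  obtain t where "t \<ge> 0" "s t = 1 / R0"
    using sir_susceptible_reaches_threshold[OF sol \<open>R0 > 0\<close>] assms by blast
  then have "i t = ?peak"
    using conserved[of t] by (simp add: sir_invariant_def)
  moreover have "bdd_above (i ` {0..})"
    by (rule bdd_aboveI2[where M = ?peak]) (use below in auto)
  ultimately have "?peak \<le> (SUP t\<in>{0..}. i t)"
    using cSUP_upper[of t "{0..}" i] \<open>t \<ge> 0\<close> by simp
  moreover have "(SUP t\<in>{0..}. i t) \<le> ?peak"
    using below by (intro cSUP_least) auto
  ultimately show ?thesis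
    by linarith
qed

lemma fsir_peak_less:
  assumes sol: "fsir_solution R0 \<kappa> s i" and "R0 > 0"
    and \<kappa>_nonneg: "\<And>x. x \<in> {0..1} \<Longrightarrow> \<kappa> x \<ge> 0" and \<kappa>_pos: "\<And>x. x \<in> {0<..1} \<Longrightarrow> \<kappa> x > 0"
    and s_nonneg: "\<And>t. t \<ge> 0 \<Longrightarrow> s t \<ge> 0" and i_nonneg: "\<And>t. t \<ge> 0 \<Longrightarrow> i t \<ge> 0"
    and "s 0 + i 0 \<le> 1" "s 0 * R0 > 1" "i 0 > 0"
  shows "(SUP t\<in>{0..}. i t) < sir_invariant R0 (s 0) (i 0) - sir_invariant R0 (1 / R0) 0"
proof -
  have i_le_1: "i t \<le> 1" if "t \<ge> 0" for t
    using fsir_sum_le_initial[OF sol i_nonneg that] s_nonneg[OF that] \<open>s 0 + i 0 \<le> 1\<close> by linarith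
  have \<kappa>_i_nonneg: "\<kappa> (i t) \<ge> 0" if "t \<ge> 0" for t
    using \<kappa>_nonneg i_nonneg[OF that] i_le_1[OF that] by simp
  have "s 0 > 0"
    using zero_less_mult_pos2[of "s 0" R0] assms by simp
  have pos: "s t > 0" "i t > 0" if "t \<ge> 0" for t
    using fsir_positive[OF sol \<open>R0 > 0\<close> \<open>s 0 > 0\<close> \<open>i 0 > 0\<close> s_nonneg i_nonneg i_le_1 \<kappa>_i_nonneg that]
    by simp_all
  define V where "V = (\<lambda>t. sir_invariant R0 (s t) (i t) - sir_invariant R0 (1 / R0) 0)"
  have V_deriv: "(V has_real_derivative - i t * \<kappa> (i t) / (1 + \<kappa> (i t))) (at t within {0..})"
    if "t \<ge> 0" for t
  proof -
    have "1 + \<kappa> (i t) \<noteq> 0"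
      using \<kappa>_i_nonneg[OF that] by linarith
    from fsir_invariant_has_derivative[OF sol _ that pos(1)[OF that] this] \<open>R0 > 0\<close>
    have "((\<lambda>t. sir_invariant R0 (s t) (i t)) has_real_derivative
        - i t * \<kappa> (i t) / (1 + \<kappa> (i t))) (at t within {0..})"
      by simp
    from DERIV_diff[OF this DERIV_const] show ?thesis
      by (simp add: V_def)
  qed
  have V_deriv_neg: "- i t * \<kappa> (i t) / (1 + \<kappa> (i t)) < 0" if "t > 0" for t
    using pos(2)[of t] i_le_1[of t] \<kappa>_pos[of "i t"] that by (simp add: divide_neg_pos add_pos_pos)
  have "(SUP t\<in>{0..}. i t) < V 0"
  proof (rule SUP_less_by_majorant[where g = V and T = 1])
    show "continuous_on {0..1} i"
      using continuous_on_atLeast_if_deriv[OF fsir_infected_deriv[OF sol]]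
      by (rule continuous_on_subset) auto
    have "s 0 \<noteq> 1 / R0"
      using \<open>s 0 * R0 > 1\<close> by (auto split: if_splits)
    then show "i 0 < V 0"
      using sir_invariant_gt[OF \<open>R0 > 0\<close> \<open>s 0 > 0\<close>, of "i 0"] by (simp add: V_def)
    show "i t \<le> V t" if "t > 0" for t
      using sir_invariant_ge[OF \<open>R0 > 0\<close> pos(1), of t "i t"] that by (simp add: V_def)
    show "V t < V 0" if "t > 0" for t
      by (rule deriv_neg_imp_strict_antimono_atLeast[OF V_deriv V_deriv_neg]) (use that in auto)
    show "V t \<le> V 1" if "1 \<le> t" for t
      using deriv_neg_imp_strict_antimono_atLeast[OF V_deriv V_deriv_neg, of 1 t] that by force
  qed simp
  then show ?thesis
    by (simp add: V_def)
qed

theorem proposition2: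
  fixes R0 s0 i0 r0 :: real
    and \<kappa> :: "real \<Rightarrow> real"
    and s i s\<^sub>c i\<^sub>c :: "real \<Rightarrow> real"
  assumes R0_pos: "R0 > 0"
    and kappa_nonneg: "\<forall>x\<in>{0..1}. \<kappa> x \<ge> 0"
    and kappa_mono: "mono_on {0..1} \<kappa>"
    and kappa_0: "\<kappa> 0 = 0"
    and kappa_pos: "\<forall>x\<in>{0<..1}. \<kappa> x > 0"
    and s0_nonneg: "s0 \<ge> 0" and i0_pos: "i0 > 0" and r0_nonneg: "r0 \<ge> 0"
    and sum_one: "s0 + i0 + r0 = 1"
    and threshold: "s0 * R0 > 1 + \<kappa> i0"
    and s_ode: "\<forall>\<tau>\<ge>0. (s has_real_derivative (- R0 * (1 / (1 + \<kappa> (i \<tau>))) * s \<tau> * i \<tau>)) (at \<tau> within {0..})"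
    and i_ode: "\<forall>\<tau>\<ge>0. (i has_real_derivative ((R0 * (1 / (1 + \<kappa> (i \<tau>))) * s \<tau> - 1) * i \<tau>)) (at \<tau> within {0..})"
    and s_init: "s 0 = s0" and i_init: "i 0 = i0"
    and s_nonneg: "\<forall>\<tau>\<ge>0. s \<tau> \<ge> 0" and i_nonneg: "\<forall>\<tau>\<ge>0. i \<tau> \<ge> 0"
    and sc_ode: "\<forall>\<tau>\<ge>0. (s\<^sub>c has_real_derivative (- R0 * s\<^sub>c \<tau> * i\<^sub>c \<tau>)) (at \<tau> within {0..})"
    and ic_ode: "\<forall>\<tau>\<ge>0. (i\<^sub>c has_real_derivative ((R0 * s\<^sub>c \<tau> - 1) * i\<^sub>c \<tau>)) (at \<tau> within {0..})"
    and sc_init: "s\<^sub>c 0 = s0" and ic_init: "i\<^sub>c 0 = i0"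
  shows "(SUP \<tau>\<in>{0..}. i \<tau>) < (SUP \<tau>\<in>{0..}. i\<^sub>c \<tau>)"
proof -
  have sol: "fsir_solution R0 \<kappa> s i"
    using s_ode i_ode by (simp add: fsir_solution_def)
  have sol\<^sub>c: "fsir_solution R0 (\<lambda>_. 0) s\<^sub>c i\<^sub>c"
    using sc_ode ic_ode by (simp add: fsir_solution_def)
  have "\<kappa> i0 \<ge> 0"
    using kappa_nonneg i0_pos s0_nonneg r0_nonneg sum_one by auto
  then have "s0 * R0 > 1"
    using threshold by linarith
  have "(SUP \<tau>\<in>{0..}. i \<tau>) < sir_invariant R0 s0 i0 - sir_invariant R0 (1 / R0) 0"
    using fsir_peak_less[OF sol R0_pos] kappa_nonneg kappa_pos s_nonneg i_nonneg
      s_init i_init sum_one r0_nonneg \<open>s0 * R0 > 1\<close> i0_pos by simp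
  also have "\<dots> = (SUP \<tau>\<in>{0..}. i\<^sub>c \<tau>)"
    using sir_peak[OF sol\<^sub>c R0_pos] sc_init ic_init \<open>s0 * R0 > 1\<close> i0_pos by simp
  finally show ?thesis .
qed

end
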